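(* Assume (H1). Let $h\ge0$ be an integer, $\mathbf{a}\in\mathbb{N}^I[h]$ and $m\in\{0,\dots,n\}$. Then $$\mathbb{P}_n(A_{u(m)}=\mathbf{a})=\mathbb{Q}_h(\mathbf{a})\,\frac{\mathbb{P}\big(|\mathbf{f}_{N_1(\mathbf{a})}|=m-h,\ |\mathbf{f}'_{1+N_2(\mathbf{a})}|=n+1-m\big)}{\mathbb{P}(|\mathbf{T}|=n+1)},$$ where $\mathbf{f}$ and $\mathbf{f}'$ are independent random forests.
   Context: Planar trees: finite subsets $T$ of the set of finite words over $\{1,2,\dots\}$ containing the empty word $\emptyset$, with $ui\in T\Rightarrow u\in T$ and $uj\in T$ for $1\le j\le i$. $c_u(T)$ = number of children, $|u|$ = word length; vertices ordered lexicographically (prefixes first), $u(k)$ the $k$-th vertex, $u(0)=\emptyset$. $|T|$ is the number of vertices. (H1): $\mu=(\mu_k)_{k\ge0}$ probability on $\mathbb{N}$ with $\mu_0+\mu_1\ne1$, $\sum_kk\mu_k=1$, $\sum_{k\le K}\mu_k=1$ for some integer $K>0$. $\mathbf{T}$ is a Galton–Watson tree with offspring law $\mu$ and $\mathbb{P}_n=\mathbb{P}(\cdot\mid|\mathbf{T}|=n+1)$ (for $n$ with positive conditioning probability). For $k\ge0$, $\mathbf{f}_k=(\mathbf{T}^1,\dots,\mathbf{T}^k)$ is a forest of $k$ i.i.d. such GW trees, with size $|\mathbf{f}_k|=\sum_i|\mathbf{T}^i|$. $I_K=\{(k,j):1\le j\le k\le K\}$; $\mathbb{N}^I[h]$ is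 the set of $c\in\mathbb{N}^{I_K}$ with $\sum_{i\in I_K}c_i=h$; $\mathbb{Q}_h(\mathbf{a})=\binom{h}{(\mathbf{a}_i)_{i\in I_K}}\prod_{(k,j)\in I_K}\mu_k^{\mathbf{a}_{k,j}}$ for $\mathbf{a}\in\mathbb{N}^I[h]$ (the multinomial law with parameters $h$ and $p_{k,j}=\mu_k$). For $\mathbf{a}\in\mathbb{R}^{I_K}$, $N_1(\mathbf{a})=\sum_{(k,j)}(j-1)\mathbf{a}_{k,j}$ and $N_2(\mathbf{a})=\sum_{(k,j)}(k-j)\mathbf{a}_{k,j}$. Lineage: $A_u=(A_{u,k,j})_{(k,j)\in I_K}$, where $A_{u,k,j}$ is the number of strict ancestors $v$ of $u$ with $c_v=k$ such that $u$ is a descendant of (or equal to) $vj$. *)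

theory Defs
  imports Complex_Main "HOL-Library.Sublist"
begin

text \<open>Planar trees: finite sets of words over positive integers (nat lists with letters \<ge> 1).\<close>
definition planar_tree :: "nat list set \<Rightarrow> bool" where
  "planar_tree T \<longleftrightarrow> finite T \<and> [] \<in> T \<and> (\<forall>w\<in>T. \<forall>x\<in>set w. 1 \<le> x) \<and>
     (\<forall>u i. u @ [i] \<in> T \<longrightarrow> u \<in> T \<and> (\<forall>j. 1 \<le> j \<and> j \<le> i \<longrightarrow> u @ [j] \<in> T))"

definition children :: "nat list set \<Rightarrow> nat list \<Rightarrow> nat" where
  "children T u = card {i. u @ [i] \<in> T}"

text \<open>Lexicographic order on words, prefixes first.\<close>
definition lex_less :: "nat list \<Rightarrow> nat list \<Rightarrow> bool" where
  "lex_less v u \<longleftrightarrow> (v, u) \<in> lexord {(a, b). a < b}"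

text \<open>The k-th vertex u(k) (u(0) is the root) in lexicographic order.\<close>
definition vertex :: "nat list set \<Rightarrow> nat \<Rightarrow> nat list" where
  "vertex T k = (THE u. u \<in> T \<and> card {v \<in> T. lex_less v u} = k)"

text \<open>Probability P(T = t) for a Galton--Watson tree with offspring law mu.\<close>
definition gw_weight :: "(nat \<Rightarrow> real) \<Rightarrow> nat list set \<Rightarrow> real" where
  "gw_weight \<mu> T = (\<Prod>u\<in>T. \<mu> (children T u))"

definition gw_size_prob :: "(nat \<Rightarrow> real) \<Rightarrow> nat \<Rightarrow> real" where
  "gw_size_prob \<mu> N = (\<Sum>T\<in>{T. planar_tree T \<and> card T = N}. gw_weight \<mu> T)"

text \<open>P(|f_k| = s) for a forest of k i.i.d. GW trees; s is an integer (probability 0 if s < 0).\<close>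
definition forest_size_prob :: "(nat \<Rightarrow> real) \<Rightarrow> nat \<Rightarrow> int \<Rightarrow> real" where
  "forest_size_prob \<mu> k s =
     (\<Sum>ts\<in>{ts. length ts = k \<and> (\<forall>T\<in>set ts. planar_tree T) \<and> int (\<Sum>T\<leftarrow>ts. card T) = s}.
        \<Prod>T\<leftarrow>ts. gw_weight \<mu> T)"

definition IK :: "nat \<Rightarrow> (nat \<times> nat) set" where
  "IK K = {(k, j). 1 \<le> j \<and> j \<le> k \<and> k \<le> K}"

definition lineage :: "nat list set \<Rightarrow> nat list \<Rightarrow> nat \<times> nat \<Rightarrow> nat" where
  "lineage T u kj = card {v. strict_prefix v u \<and> children T v = fst kj \<and> prefix (v @ [snd kj]) u}"

text \<open>P_n(A_{u(m)} = a), with the event A_{u(m)} = a compared on I_K.\<close>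
definition lineage_prob :: "(nat \<Rightarrow> real) \<Rightarrow> nat \<Rightarrow> nat \<Rightarrow> nat \<Rightarrow> (nat \<times> nat \<Rightarrow> nat) \<Rightarrow> real" where
  "lineage_prob \<mu> K n m a =
     (\<Sum>T\<in>{T. planar_tree T \<and> card T = n + 1 \<and> (\<forall>i\<in>IK K. lineage T (vertex T m) i = a i)}.
        gw_weight \<mu> T) / gw_size_prob \<mu> (n + 1)"

text \<open>Multinomial law Q_h(a) with p_{k,j} = mu_k.\<close>
definition Qh :: "(nat \<Rightarrow> real) \<Rightarrow> nat \<Rightarrow> nat \<Rightarrow> (nat \<times> nat \<Rightarrow> nat) \<Rightarrow> real" where
  "Qh \<mu> K h a = fact h / (\<Prod>i\<in>IK K. fact (a i)) * (\<Prod>(k, j)\<in>IK K. \<mu> k ^ a (k, j))"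

definition N1 :: "nat \<Rightarrow> (nat \<times> nat \<Rightarrow> nat) \<Rightarrow> nat" where
  "N1 K a = (\<Sum>(k, j)\<in>IK K. (j - 1) * a (k, j))"

definition N2 :: "nat \<Rightarrow> (nat \<times> nat \<Rightarrow> nat) \<Rightarrow> nat" where
  "N2 K a = (\<Sum>(k, j)\<in>IK K. (k - j) * a (k, j))"

end

theory Submission
  imports Defs "HOL-Library.List_Lexorder"
begin

text \<open>Cut the tree at its root. If the root has k children and u(m) lies in the j-th subtree,
  the tree consists of j - 1 trees to the left, the subtree t containing u(m), and k - j trees to
  the right; u(m) is preceded by the root, the left trees and its predecessors in t, and its
  lineage is its lineage in t with the entry (k, j) raised by one. Summed with Galton--Watson
  weights, the root contributes \<open>\<mu>\<^sub>k\<close> and the side trees contribute forest size probabilities.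
  By induction on h, removing one entry (k, j) from a turns the sum over (k, j) into the recursion
  of the multinomial law Q_h, while the side forests merge by convolution of forest sizes with the
  N1 and N2 forests of the lineage with that entry removed.\<close>

section \<open>Planar trees as a root with a list of subtrees\<close>

lemma planar_tree_prefix: "planar_tree T \<Longrightarrow> u @ v \<in> T \<Longrightarrow> u \<in> T"
proof (induction v rule: rev_induct)
  case (snoc x v)
  then show ?case unfolding planar_tree_def by (metis append_assoc)
qed simp

lemma planar_tree_finite: "planar_tree T \<Longrightarrow> finite T"
  and planar_tree_Nil: "planar_tree T \<Longrightarrow> [] \<in> T"
  by (simp_all add: planar_tree_def)

lemma children_iff:
  assumes "planar_tree T"
  shows "u @ [i] \<in> T \<longleftrightarrow> 1 \<le> i \<and> i \<le> children T u"
proof -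
  let ?S = "{i. u @ [i] \<in> T}"
  have fin: "finite ?S"
    using assms finite_vimageI[of T "\<lambda>i. u @ [i]"]
    by (simp add: vimage_def inj_on_def planar_tree_def)
  have pos: "1 \<le> i" if "i \<in> ?S" for i
    using assms that unfolding planar_tree_def by fastforce
  have down: "j \<in> ?S" if "i \<in> ?S" "1 \<le> j" "j \<le> i" for i j
    using assms that unfolding planar_tree_def by blast
  have "?S = {1..card ?S}"
  proof (cases "?S = {}")
    case False
    have "?S = {1..Max ?S}"
    proof
      show "?S \<subseteq> {1..Max ?S}" using Max_ge[OF fin] pos by auto
      show "{1..Max ?S} \<subseteq> ?S" using Max_in[OF fin False] down by auto
    qed
    moreover from this have "card ?S = Max ?S" by (metis card_atLeastAtMost diff_Suc_1)
    ultimately show ?thesis by simp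
  qed simp
  then show ?thesis unfolding children_def by (metis atLeastAtMost_iff mem_Collect_eq)
qed

text \<open>The forest ts hangs below a new root; its i-th tree (counted from 0) below the letter
  Suc i.\<close>
definition node :: "nat list set list \<Rightarrow> nat list set" where
  "node ts = insert [] (\<Union>i<length ts. (#) (Suc i) ` (ts ! i))"

definition subtree :: "nat list set \<Rightarrow> nat \<Rightarrow> nat list set" where
  "subtree T i = {w. Suc i # w \<in> T}"

abbreviation forest :: "nat list set list \<Rightarrow> bool" where
  "forest ts \<equiv> \<forall>t\<in>set ts. planar_tree t"

lemma Nil_in_node [simp]: "[] \<in> node ts"
  by (simp add: node_def)

lemma Cons_in_node_iff: "i < length ts \<Longrightarrow> Suc i # w \<in> node ts \<longleftrightarrow> w \<in> ts ! i"
  unfolding node_def by auto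

lemma in_node_iff: "v \<in> node ts \<longleftrightarrow> v = [] \<or> (\<exists>i<length ts. \<exists>w\<in>ts ! i. v = Suc i # w)"
  unfolding node_def by auto

lemma subtree_node: "i < length ts \<Longrightarrow> subtree (node ts) i = ts ! i"
  by (auto simp: subtree_def Cons_in_node_iff)

lemma children_node_Cons: "i < length ts \<Longrightarrow> children (node ts) (Suc i # u) = children (ts ! i) u"
  unfolding children_def by (simp add: Cons_in_node_iff)

lemma singleton_in_node_iff:
  assumes "forest ts"
  shows "[j] \<in> node ts \<longleftrightarrow> 1 \<le> j \<and> j \<le> length ts"
proof (cases j)
  case (Suc i)
  have "[] \<in> ts ! i" if "i < length ts" using assms that planar_tree_Nil nth_mem by blast
  then show ?thesis using Suc Cons_in_node_iff[of i ts "[]"] by (auto simp: in_node_iff)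
qed (simp add: in_node_iff)

lemma children_node_Nil:
  assumes "forest ts"
  shows "children (node ts) [] = length ts"
proof -
  have "{i. [i] \<in> node ts} = {1..length ts}"
    using singleton_in_node_iff[OF assms] by (simp add: set_eq_iff)
  then show ?thesis by (simp add: children_def)
qed

lemma planar_tree_node:
  assumes "forest ts"
  shows "planar_tree (node ts)"
  unfolding planar_tree_def
proof (intro conjI ballI)
  show "finite (node ts)"
    using assms by (auto simp: node_def planar_tree_finite)
  show "[] \<in> node ts" by simp
  show "1 \<le> x" if w: "w \<in> node ts" and x: "x \<in> set w" for w x
  proof -
    have "w \<noteq> []" using x by auto
    then obtain i w' where "i < length ts" "w' \<in> ts ! i" "w = Suc i # w'"
      using w unfolding in_node_iff by blast
    moreover have "planar_tree (ts ! i)" using assms \<open>i < length ts\<close> by simp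
    ultimately show ?thesis using x unfolding planar_tree_def by auto
  qed
  show "\<forall>u i. u @ [i] \<in> node ts \<longrightarrow>
      u \<in> node ts \<and> (\<forall>j. 1 \<le> j \<and> j \<le> i \<longrightarrow> u @ [j] \<in> node ts)"
  proof (intro allI impI)
    fix u i assume "u @ [i] \<in> node ts"
    then obtain l w where lw: "l < length ts" "w \<in> ts ! l" "u @ [i] = Suc l # w"
      by (auto simp: in_node_iff)
    show "u \<in> node ts \<and> (\<forall>j. 1 \<le> j \<and> j \<le> i \<longrightarrow> u @ [j] \<in> node ts)"
    proof (cases u)
      case Nil
      then have "i = Suc l" using lw by simp
      then show ?thesis
        using Nil assms lw(1) by (simp add: singleton_in_node_iff)
    next
      case (Cons y u')
      then have "y = Suc l" "u' @ [i] \<in> ts ! l" using lw by auto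
      moreover have "planar_tree (ts ! l)" using assms lw(1) by simp
      ultimately have "u' \<in> ts ! l \<and> (\<forall>j. 1 \<le> j \<and> j \<le> i \<longrightarrow> u' @ [j] \<in> ts ! l)"
        unfolding planar_tree_def by blast
      then show ?thesis using Cons \<open>y = Suc l\<close> lw(1) by (simp add: Cons_in_node_iff)
    qed
  qed
qed

lemma planar_tree_subtree:
  assumes "planar_tree T" "[Suc i] \<in> T"
  shows "planar_tree (subtree T i)"
  unfolding planar_tree_def
proof (intro conjI ballI)
  show "finite (subtree T i)"
    using assms(1) finite_vimageI[of T "(#) (Suc i)"]
    by (simp add: subtree_def vimage_def planar_tree_finite)
  show "[] \<in> subtree T i" using assms(2) by (simp add: subtree_def)
  show "1 \<le> x" if "w \<in> subtree T i" "x \<in> set w" for w x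
    using assms(1) that unfolding subtree_def planar_tree_def by fastforce
  have "(Suc i # u) @ [k] \<in> T \<longrightarrow>
      Suc i # u \<in> T \<and> (\<forall>j. 1 \<le> j \<and> j \<le> k \<longrightarrow> (Suc i # u) @ [j] \<in> T)" for u k
    using assms(1) unfolding planar_tree_def by blast
  then show "\<forall>u k. u @ [k] \<in> subtree T i \<longrightarrow>
      u \<in> subtree T i \<and> (\<forall>j. 1 \<le> j \<and> j \<le> k \<longrightarrow> u @ [j] \<in> subtree T i)"
    by (simp add: subtree_def)
qed

definition subtrees :: "nat list set \<Rightarrow> nat list set list" where
  "subtrees T = map (subtree T) [0..<children T []]"

lemma length_subtrees [simp]: "length (subtrees T) = children T []"
  by (simp add: subtrees_def)

lemma forest_subtrees: "planar_tree T \<Longrightarrow> forest (subtrees T)"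
  by (auto simp: subtrees_def children_iff[of T "[]", simplified] intro: planar_tree_subtree)

lemma node_subtrees:
  assumes "planar_tree T"
  shows "node (subtrees T) = T"
proof (intro set_eqI iffI)
  fix w assume "w \<in> T"
  show "w \<in> node (subtrees T)"
  proof (cases w)
    case (Cons x w')
    have "[x] \<in> T" using planar_tree_prefix[OF assms, of "[x]"] \<open>w \<in> T\<close> Cons by simp
    then obtain i where "x = Suc i" "i < children T []"
      using children_iff[OF assms, of "[]" x] by (cases x) auto
    then show ?thesis
      using \<open>w \<in> T\<close> Cons by (simp add: subtrees_def Cons_in_node_iff subtree_def)
  qed (simp add: node_def)
qed (use assms in \<open>auto simp: in_node_iff subtrees_def subtree_def planar_tree_Nil\<close>)

lemma node_inj:
  assumes "forest ts" "forest ts'" "node ts = node ts'"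
  shows "ts = ts'"
proof (rule nth_equalityI)
  show "length ts = length ts'"
    using children_node_Nil[OF assms(1)] children_node_Nil[OF assms(2)] assms(3) by simp
  then show "ts ! i = ts' ! i" if "i < length ts" for i
    using that subtree_node[of i ts] subtree_node[of i ts'] assms(3) by simp
qed

lemma sum_node:
  assumes "forest ts"
  shows "(\<Sum>v\<in>node ts. g v) = g [] + (\<Sum>i<length ts. \<Sum>w\<in>ts ! i. g (Suc i # w))"
proof -
  let ?U = "\<Union>i<length ts. (#) (Suc i) ` (ts ! i)"
  have fin: "\<forall>i\<in>{..<length ts}. finite ((#) (Suc i) ` (ts ! i))"
    using assms by (simp add: planar_tree_finite)
  have "(\<Sum>v\<in>node ts. g v) = g [] + (\<Sum>v\<in>?U. g v)"
    unfolding node_def using fin by (subst sum.insert) auto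
  also have "(\<Sum>v\<in>?U. g v) = (\<Sum>i<length ts. \<Sum>v\<in>(#) (Suc i) ` (ts ! i). g v)"
    by (rule sum.UNION_disjoint[OF _ fin]) auto
  also have "\<dots> = (\<Sum>i<length ts. \<Sum>w\<in>ts ! i. g (Suc i # w))"
    by (simp add: sum.reindex)
  finally show ?thesis .
qed

lemma prod_node:
  assumes "forest ts"
  shows "(\<Prod>v\<in>node ts. g v) = g [] * (\<Prod>i<length ts. \<Prod>w\<in>ts ! i. g (Suc i # w))"
proof -
  let ?U = "\<Union>i<length ts. (#) (Suc i) ` (ts ! i)"
  have fin: "\<forall>i\<in>{..<length ts}. finite ((#) (Suc i) ` (ts ! i))"
    using assms by (simp add: planar_tree_finite)
  have "(\<Prod>v\<in>node ts. g v) = g [] * (\<Prod>v\<in>?U. g v)"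
    unfolding node_def using fin by (subst prod.insert) auto
  also have "(\<Prod>v\<in>?U. g v) = (\<Prod>i<length ts. \<Prod>v\<in>(#) (Suc i) ` (ts ! i). g v)"
    by (rule prod.UNION_disjoint[OF _ fin]) auto
  also have "\<dots> = (\<Prod>i<length ts. \<Prod>w\<in>ts ! i. g (Suc i # w))"
    by (simp add: prod.reindex)
  finally show ?thesis .
qed

lemma card_node:
  assumes "forest ts"
  shows "card (node ts) = 1 + (\<Sum>t\<leftarrow>ts. card t)"
  using sum_node[OF assms, of "\<lambda>_. 1 :: nat"]
  by (simp add: sum_list_sum_nth atLeast0LessThan)

lemma gw_weight_node:
  assumes "forest ts"
  shows "gw_weight \<mu> (node ts) = \<mu> (length ts) * (\<Prod>t\<leftarrow>ts. gw_weight \<mu> t)"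
proof -
  have "(\<Prod>w\<in>ts ! i. \<mu> (children (node ts) (Suc i # w))) = gw_weight \<mu> (ts ! i)"
    if "i < length ts" for i
    using that by (simp add: gw_weight_def children_node_Cons)
  then show ?thesis
    using prod_node[OF assms, of "\<lambda>v. \<mu> (children (node ts) v)"]
    by (simp add: gw_weight_def children_node_Nil[OF assms] prod.list_conv_set_nth
        atLeast0LessThan)
qed

lemma gw_weight_eq_0:
  assumes "planar_tree T" "\<mu> (children T []) = 0"
  shows "gw_weight \<mu> T = 0"
  using assms planar_tree_finite planar_tree_Nil by (auto simp: gw_weight_def prod_zero_iff)

section \<open>Lexicographic rank and lineage\<close>

lemma lex_less_eq_less: "lex_less = (<)"
  by (simp add: lex_less_def list_less_def fun_eq_iff)

definition lex_rank :: "nat list set \<Rightarrow> nat list \<Rightarrow> nat" where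
  "lex_rank T u = card {v \<in> T. v < u}"

lemma vertex_eq_lex_rank: "vertex T m = (THE u. u \<in> T \<and> lex_rank T u = m)"
  by (simp add: vertex_def lex_rank_def lex_less_eq_less)

lemma lex_rank_strict_mono_on:
  assumes "finite T" "u \<in> T" "u < v"
  shows "lex_rank T u < lex_rank T v"
  unfolding lex_rank_def
  by (rule psubset_card_mono) (use assms in auto)

lemma bij_betw_lex_rank:
  assumes "finite T"
  shows "bij_betw (lex_rank T) T {..<card T}"
proof (rule bij_betw_imageI)
  show inj: "inj_on (lex_rank T) T"
    by (rule inj_onI) (metis assms lex_rank_strict_mono_on less_irrefl linorder_neqE)
  have "lex_rank T u < card T" if "u \<in> T" for u
    unfolding lex_rank_def by (rule psubset_card_mono) (use assms that in auto)
  then show "lex_rank T ` T = {..<card T}"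
    using card_image[OF inj] by (intro card_subset_eq) auto
qed

lemma vertex_eqI:
  assumes "finite T" "u \<in> T" "lex_rank T u = m"
  shows "vertex T m = u"
  unfolding vertex_eq_lex_rank
proof (rule the_equality)
  show "v = u" if "v \<in> T \<and> lex_rank T v = m" for v
    using that assms bij_betw_lex_rank[OF assms(1)] by (auto dest: bij_betw_imp_inj_on inj_onD)
qed (use assms in simp)

lemma lex_rank_Nil [simp]: "lex_rank T [] = 0"
  by (simp add: lex_rank_def)

lemma lex_rank_pos:
  assumes "planar_tree T" "u \<noteq> []"
  shows "0 < lex_rank T u"
proof -
  have "[] \<in> {v \<in> T. v < u}"
    using assms by (cases u) (simp_all add: planar_tree_Nil)
  then show ?thesis
    unfolding lex_rank_def using planar_tree_finite[OF assms(1)] by (auto simp: card_gt_0_iff)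
qed

lemma sum_indicator_eq_card: "finite A \<Longrightarrow> (\<Sum>x\<in>A. if P x then 1 else 0 :: nat) = card {x \<in> A. P x}"
  by (simp add: sum.If_cases Int_def)

lemma lex_rank_node:
  assumes "forest ts" "i < length ts"
  shows "lex_rank (node ts) (Suc i # u) = 1 + (\<Sum>t\<leftarrow>take i ts. card t) + lex_rank (ts ! i) u"
proof -
  let ?c = "\<lambda>v. if v < Suc i # u then 1 else 0 :: nat"
  define f where "f l = (\<Sum>w\<in>ts ! l. ?c (Suc l # w))" for l
  have "f l = card (ts ! l)" if "l < i" for l
    using that by (simp add: f_def)
  then have "(\<Sum>l<i. f l) = (\<Sum>t\<leftarrow>take i ts. card t)"
    using assms(2) by (simp add: sum_list_sum_nth atLeast0LessThan min_def)
  moreover have "f i = lex_rank (ts ! i) u"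
    using assms by (simp add: f_def sum_indicator_eq_card lex_rank_def planar_tree_finite)
  moreover have "(\<Sum>l=Suc i..<length ts. f l) = 0"
    by (simp add: f_def)
  moreover have "(\<Sum>l<length ts. f l) = (\<Sum>l<i. f l) + (\<Sum>l=i..<length ts. f l)"
    using sum.atLeastLessThan_concat[of 0 i "length ts" f] assms(2) by (simp add: atLeast0LessThan)
  moreover have "(\<Sum>l=i..<length ts. f l) = f i + (\<Sum>l=Suc i..<length ts. f l)"
    using assms(2) by (simp add: sum.atLeast_Suc_lessThan)
  ultimately have "(\<Sum>l<length ts. f l) = (\<Sum>t\<leftarrow>take i ts. card t) + lex_rank (ts ! i) u"
    by simp
  moreover have "lex_rank (node ts) (Suc i # u) = (\<Sum>v\<in>node ts. ?c v)"
    using planar_tree_finite[OF planar_tree_node[OF assms(1)]]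
    by (simp add: sum_indicator_eq_card lex_rank_def)
  ultimately show ?thesis
    using sum_node[OF assms(1), of ?c] by (simp add: f_def)
qed

definition bump :: "'a \<Rightarrow> ('a \<Rightarrow> nat) \<Rightarrow> 'a \<Rightarrow> nat" where
  "bump x f = f(x := Suc (f x))"

lemma lineage_Nil: "lineage T [] = (\<lambda>_. 0)"
  by (simp add: lineage_def fun_eq_iff)

lemma lineage_node:
  assumes "forest ts" "i < length ts"
  shows "lineage (node ts) (Suc i # u) = bump (length ts, Suc i) (lineage (ts ! i) u)"
proof
  fix x :: "nat \<times> nat"
  obtain k j where x: "x = (k, j)" by fastforce
  let ?S = "{v. strict_prefix v u \<and> children (ts ! i) v = k \<and> prefix (v @ [j]) u}"
  let ?R = "if x = (length ts, Suc i) then {[]} else {}"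
  have "{v. strict_prefix v (Suc i # u) \<and> children (node ts) v = k \<and> prefix (v @ [j]) (Suc i # u)}
      = ?R \<union> (#) (Suc i) ` ?S"
    using children_node_Nil[OF assms(1)] children_node_Cons[OF assms(2)] x
    by (auto simp: Cons_prefix_Cons strict_prefix_def prefix_Cons split: if_splits)
  moreover have "finite ?S"
    by (rule finite_subset[of _ "set (prefixes u)"]) (auto simp: strict_prefix_def)
  then have "card (?R \<union> (#) (Suc i) ` ?S) = card ?R + card ?S"
    by (subst card_Un_disjoint) (auto simp: card_image)
  ultimately have "lineage (node ts) (Suc i # u) x = card ?R + lineage (ts ! i) u x"
    unfolding lineage_def x fst_conv snd_conv by (simp only:)
  then show "lineage (node ts) (Suc i # u) x = bump (length ts, Suc i) (lineage (ts ! i) u) x"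
    by (cases "x = (length ts, Suc i)") (simp_all add: bump_def)
qed

section \<open>Forests\<close>

lemma length_less_card:
  assumes "planar_tree T" "w \<in> T"
  shows "length w < card T"
proof -
  have "set (prefixes w) \<subseteq> T"
    using assms by (auto simp: prefix_def intro: planar_tree_prefix)
  then have "card (set (prefixes w)) \<le> card T"
    by (rule card_mono[OF planar_tree_finite[OF assms(1)]])
  then show ?thesis by simp
qed

lemma letter_le_card:
  assumes "planar_tree T" "w \<in> T" "x \<in> set w"
  shows "x \<le> card T"
proof -
  obtain p q where w: "w = p @ x # q" using assms(3) by (meson split_list)
  have "p @ [x] \<in> T" using planar_tree_prefix[OF assms(1), of "p @ [x]" q] assms(2) w by simp
  then have "p @ [j] \<in> T" if "1 \<le> j" "j \<le> x" for j
    using assms(1) that unfolding planar_tree_def by blast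
  then have "(\<lambda>j. p @ [j]) ` {1..x} \<subseteq> T" by auto
  then have "card ((\<lambda>j. p @ [j]) ` {1..x}) \<le> card T"
    by (rule card_mono[OF planar_tree_finite[OF assms(1)]])
  moreover have "inj_on (\<lambda>j. p @ [j]) {1..x}" by (simp add: inj_on_def)
  ultimately show ?thesis by (simp add: card_image)
qed

lemma finite_planar_trees_card_le: "finite {T. planar_tree T \<and> card T \<le> N}"
proof (rule finite_subset)
  let ?W = "{w. set w \<subseteq> {..N} \<and> length w \<le> N}"
  show "{T. planar_tree T \<and> card T \<le> N} \<subseteq> Pow ?W"
  proof (intro subsetI PowI)
    fix T w assume "T \<in> {T. planar_tree T \<and> card T \<le> N}" "w \<in> T"
    then show "w \<in> ?W"
      using length_less_card letter_le_card by fastforce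
  qed
  show "finite (Pow ?W)" by (simp add: finite_lists_length_le)
qed

definition forests :: "nat \<Rightarrow> int \<Rightarrow> nat list set list set" where
  "forests k s = {ts. length ts = k \<and> forest ts \<and> int (\<Sum>t\<leftarrow>ts. card t) = s}"

lemma forest_size_prob_eq_sum:
  "forest_size_prob \<mu> k s = (\<Sum>ts\<in>forests k s. \<Prod>t\<leftarrow>ts. gw_weight \<mu> t)"
  by (simp add: forest_size_prob_def forests_def)

lemma finite_forests: "finite (forests k s)"
proof (rule finite_subset)
  let ?P = "{T. planar_tree T \<and> card T \<le> nat s}"
  show "forests k s \<subseteq> {ts. set ts \<subseteq> ?P \<and> length ts = k}"
    by (auto simp: forests_def member_le_sum_list)
  show "finite {ts. set ts \<subseteq> ?P \<and> length ts = k}"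
    by (intro finite_lists_length_eq finite_planar_trees_card_le)
qed

lemma forest_size_prob_neg: "s < 0 \<Longrightarrow> forest_size_prob \<mu> k s = 0"
  by (auto simp: forest_size_prob_eq_sum forests_def intro!: sum.neutral)

lemma forest_size_prob_0_left: "forest_size_prob \<mu> 0 s = (if s = 0 then 1 else 0)"
proof -
  have "forests 0 s = (if s = 0 then {[]} else {})" by (auto simp: forests_def)
  then show ?thesis by (simp add: forest_size_prob_eq_sum)
qed

lemma forest_size_prob_0_right:
  assumes "0 < k"
  shows "forest_size_prob \<mu> k 0 = 0"
proof -
  have "0 < card t" if "planar_tree t" for t
    using planar_tree_Nil[OF that] planar_tree_finite[OF that] by (auto simp: card_gt_0_iff)
  then have "forests k 0 = {}"
    using assms by (fastforce simp: forests_def length_greater_0_conv neq_Nil_conv)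
  then show ?thesis by (simp add: forest_size_prob_eq_sum)
qed

lemma forest_size_prob_1: "forest_size_prob \<mu> 1 (int N) = gw_size_prob \<mu> N"
proof -
  have "forests 1 (int N) = (\<lambda>T. [T]) ` {T. planar_tree T \<and> card T = N}"
    by (auto simp: forests_def length_Suc_conv)
  then show ?thesis
    by (simp add: forest_size_prob_eq_sum gw_size_prob_def sum.reindex inj_on_def)
qed

lemma forest_size_prob_add_nat:
  "forest_size_prob \<mu> (p + q) (int s) =
    (\<Sum>x\<le>s. forest_size_prob \<mu> p (int x) * forest_size_prob \<mu> q (int s - int x))"
proof -
  let ?w = "\<lambda>ts. \<Prod>t\<leftarrow>ts. gw_weight \<mu> t"
  let ?Z = "SIGMA x:{..s}. forests p (int x) \<times> forests q (int s - int x)"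
  have "(\<Sum>x\<le>s. forest_size_prob \<mu> p (int x) * forest_size_prob \<mu> q (int s - int x))
      = (\<Sum>(x, l, r)\<in>?Z. ?w l * ?w r)"
    by (simp add: forest_size_prob_eq_sum sum_product sum.cartesian_product sum.Sigma
        finite_forests)
  also have "\<dots> = (\<Sum>ts\<in>forests (p + q) (int s). ?w ts)"
  proof (rule sum.reindex_bij_witness[where j = "\<lambda>(x, l, r). l @ r"
        and i = "\<lambda>ts. (\<Sum>t\<leftarrow>take p ts. card t, take p ts, drop p ts)"])
    fix ts assume "ts \<in> forests (p + q) (int s)"
    moreover have "(\<Sum>t\<leftarrow>ts. card t) = (\<Sum>t\<leftarrow>take p ts. card t) + (\<Sum>t\<leftarrow>drop p ts. card t)"
      by (metis append_take_drop_id map_append sum_list_append)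
    ultimately show "(\<Sum>t\<leftarrow>take p ts. card t, take p ts, drop p ts) \<in> ?Z"
      by (auto simp: forests_def dest: in_set_takeD in_set_dropD)
  qed (auto simp: forests_def)
  finally show ?thesis by (simp add: forest_size_prob_eq_sum)
qed

lemma forest_size_prob_add:
  assumes "s \<le> int N"
  shows "forest_size_prob \<mu> (p + q) s =
    (\<Sum>x\<le>N. forest_size_prob \<mu> p (int x) * forest_size_prob \<mu> q (s - int x))"
proof (cases "s < 0")
  case False
  then obtain n where n: "s = int n" by (metis nonneg_int_cases not_less)
  have "forest_size_prob \<mu> (p + q) s =
      (\<Sum>x\<le>n. forest_size_prob \<mu> p (int x) * forest_size_prob \<mu> q (s - int x))"
    unfolding n by (rule forest_size_prob_add_nat)
  also have "\<dots> = (\<Sum>x\<le>N. forest_size_prob \<mu> p (int x) * forest_size_prob \<mu> q (s - int x))"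
    by (rule sum.mono_neutral_left) (use assms n in \<open>auto simp: forest_size_prob_neg\<close>)
  finally show ?thesis .
qed (simp add: forest_size_prob_neg)

section \<open>Multinomial weights\<close>

lemma sum_mult_bump:
  fixes f :: "'a \<Rightarrow> 'b :: comm_semiring_1"
  assumes "finite A" "x \<in> A"
  shows "(\<Sum>y\<in>A. f y * of_nat (bump x a y)) = f x + (\<Sum>y\<in>A. f y * of_nat (a y))"
proof -
  have "(\<Sum>y\<in>A. f y * of_nat (bump x a y)) = f x * of_nat (Suc (a x)) + (\<Sum>y\<in>A - {x}. f y * of_nat (a y))"
    using assms by (simp add: sum.remove bump_def)
  also have "\<dots> = f x + (\<Sum>y\<in>A. f y * of_nat (a y))"
    using assms by (simp add: sum.remove algebra_simps)
  finally show ?thesis .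
qed

lemma finite_IK: "finite (IK K)"
  by (rule finite_subset[of _ "{..K} \<times> {..K}"]) (auto simp: IK_def)

lemma N1_bump: "x \<in> IK K \<Longrightarrow> N1 K (bump x a) = (snd x - 1) + N1 K a"
  using sum_mult_bump[OF finite_IK, of x K "\<lambda>y. snd y - 1" a]
  by (simp add: N1_def case_prod_beta)

lemma N2_bump: "x \<in> IK K \<Longrightarrow> N2 K (bump x a) = (fst x - snd x) + N2 K a"
  using sum_mult_bump[OF finite_IK, of x K "\<lambda>y. fst y - snd y" a]
  by (simp add: N2_def case_prod_beta)

lemma sum_IK_bump: "x \<in> IK K \<Longrightarrow> sum (bump x a) (IK K) = Suc (sum a (IK K))"
  using sum_mult_bump[OF finite_IK, of x K "\<lambda>_. 1 :: nat" a] by simp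

lemma bump_pred: "0 < a x \<Longrightarrow> bump x (a(x := a x - 1)) = a"
  by (simp add: bump_def fun_eq_iff)

lemma Qh_Suc:
  assumes "sum a (IK K) = Suc h"
  shows "Qh \<mu> K (Suc h) a =
    (\<Sum>x\<in>IK K. if 0 < a x then \<mu> (fst x) * Qh \<mu> K h (a(x := a x - 1)) else 0)"
proof -
  define D where "D b = (\<Prod>i\<in>IK K. (fact (b i) :: real))" for b :: "nat \<times> nat \<Rightarrow> nat"
  define P where "P b = (\<Prod>i\<in>IK K. \<mu> (fst i) ^ b i)" for b :: "nat \<times> nat \<Rightarrow> nat"
  have Qh_eq: "Qh \<mu> K g b = fact g / D b * P b" for g b
    by (simp add: Qh_def D_def P_def case_prod_beta)
  have D_pos: "0 < D b" for b
    by (simp add: D_def prod_pos)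
  have summand: "(if 0 < a x then \<mu> (fst x) * Qh \<mu> K h (a(x := a x - 1)) else 0) =
      real (a x) * (fact h / D a * P a)" if "x \<in> IK K" for x
  proof (cases "a x")
    case (Suc c)
    let ?b = "a(x := c)"
    have "D a = real (Suc c) * D ?b" "P a = \<mu> (fst x) * P ?b"
      using Suc that by (simp_all add: D_def P_def prod.remove[OF finite_IK] del: of_nat_Suc)
    then show ?thesis using Suc D_pos[of ?b] by (simp add: Qh_eq field_simps del: of_nat_Suc)
  qed simp
  have "(\<Sum>x\<in>IK K. if 0 < a x then \<mu> (fst x) * Qh \<mu> K h (a(x := a x - 1)) else 0) =
      (\<Sum>x\<in>IK K. real (a x)) * (fact h / D a * P a)"
    by (simp add: summand sum_distrib_right sum_divide_distrib)
  also have "(\<Sum>x\<in>IK K. real (a x)) = real (Suc h)"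
    using assms by (metis of_nat_sum)
  finally show ?thesis
    by (simp add: Qh_eq)
qed

section \<open>Marked trees and their root decomposition\<close>

definition marked_trees :: "((nat \<times> nat \<Rightarrow> nat) \<Rightarrow> bool) \<Rightarrow> nat \<Rightarrow> nat \<Rightarrow> nat list set set" where
  "marked_trees P m r =
    {T. planar_tree T \<and> card T = m + 1 + r \<and> (\<exists>u\<in>T. lex_rank T u = m \<and> P (lineage T u))}"

lemma finite_marked_trees: "finite (marked_trees P m r)"
  by (rule finite_subset[OF _ finite_planar_trees_card_le[of "m + 1 + r"]])
    (auto simp: marked_trees_def)

lemma marked_trees_0:
  "marked_trees P 0 r = (if P (\<lambda>_. 0) then {T. planar_tree T \<and> card T = r + 1} else {})"
proof -
  have "(\<exists>u\<in>T. lex_rank T u = 0 \<and> P (lineage T u)) \<longleftrightarrow> P (\<lambda>_. 0)" if "planar_tree T" for T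
  proof -
    have "lex_rank T u = 0 \<longleftrightarrow> u = []" for u
      using lex_rank_pos[OF that, of u] by (cases "u = []") auto
    then show ?thesis using planar_tree_Nil[OF that] by (auto simp: lineage_Nil)
  qed
  then show ?thesis by (auto simp: marked_trees_def)
qed

lemma vertex_in_node_append_Cons:
  assumes "forest l" "forest rr" "planar_tree t" "u \<in> t"
  defines "T \<equiv> node (l @ t # rr)" and "v \<equiv> Suc (length l) # u"
  shows "v \<in> T"
    and "lex_rank T v = 1 + (\<Sum>t\<leftarrow>l. card t) + lex_rank t u"
    and "lineage T v = bump (length l + 1 + length rr, Suc (length l)) (lineage t u)"
proof -
  have ts: "forest (l @ t # rr)" "length l < length (l @ t # rr)" "(l @ t # rr) ! length l = t"
    using assms(1-3) by auto
  show "v \<in> T"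
    using Cons_in_node_iff[OF ts(2)] ts(3) assms(4) by (simp add: T_def v_def)
  show "lex_rank T v = 1 + (\<Sum>t\<leftarrow>l. card t) + lex_rank t u"
    using lex_rank_node[OF ts(1,2)] ts(3) by (simp add: T_def v_def)
  show "lineage T v = bump (length l + 1 + length rr, Suc (length l)) (lineage t u)"
    using lineage_node[OF ts(1,2)] ts(3) by (simp add: T_def v_def)
qed

lemma node_in_marked_trees:
  assumes "forest l" "forest rr"
    and "t \<in> marked_trees (P \<circ> bump (length l + 1 + length rr, Suc (length l))) m r"
  shows "node (l @ t # rr) \<in> marked_trees P (1 + (\<Sum>t\<leftarrow>l. card t) + m) (r + (\<Sum>t\<leftarrow>rr. card t))"
proof -
  obtain u where t: "planar_tree t" "card t = m + 1 + r" "u \<in> t"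
    "lex_rank t u = m" "P (bump (length l + 1 + length rr, Suc (length l)) (lineage t u))"
    using assms(3) by (auto simp: marked_trees_def)
  have "forest (l @ t # rr)" using assms(1,2) t(1) by auto
  then show ?thesis
    using vertex_in_node_append_Cons[OF assms(1,2) t(1,3)] t
    by (auto simp: marked_trees_def planar_tree_node card_node)
qed

lemma marked_trees_decompose:
  assumes "T \<in> marked_trees P m r" "0 < m"
  obtains l t rr where "T = node (l @ t # rr)" "forest l" "forest rr"
    "length (l @ t # rr) = children T []"
    "t \<in> marked_trees (P \<circ> bump (children T [], Suc (length l)))
        (m - 1 - (\<Sum>t\<leftarrow>l. card t)) (r - (\<Sum>t\<leftarrow>rr. card t))"
    "(\<Sum>t\<leftarrow>l. card t) < m" "(\<Sum>t\<leftarrow>rr. card t) \<le> r"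
proof -
  obtain u where T: "planar_tree T" "card T = m + 1 + r" "u \<in> T" "lex_rank T u = m"
    "P (lineage T u)"
    using assms(1) by (auto simp: marked_trees_def)
  define ts where "ts = subtrees T"
  have ts: "T = node ts" "forest ts" "length ts = children T []"
    using T(1) by (simp_all add: ts_def node_subtrees forest_subtrees)
  have "u \<noteq> []" using T(4) assms(2) by auto
  then obtain i u' where i: "i < length ts" "u' \<in> ts ! i" "u = Suc i # u'"
    using T(3) ts(1) by (auto simp: in_node_iff)
  define l t rr where "l = take i ts" and "t = ts ! i" and "rr = drop (Suc i) ts"
  have split: "ts = l @ t # rr" "length l = i"
    using i(1) by (simp_all add: l_def t_def rr_def id_take_nth_drop)
  have forests: "forest l" "forest rr" "planar_tree t"
    using ts(2) i(1) by (auto simp: l_def t_def rr_def dest: in_set_takeD in_set_dropD)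
  have u': "u' \<in> t" using i(2) by (simp add: t_def)
  have T_eq: "T = node (l @ t # rr)" using ts(1) split(1) by simp
  have len: "length l + 1 + length rr = children T []" using ts(3) split(1) by simp
  have rank: "m = 1 + (\<Sum>t\<leftarrow>l. card t) + lex_rank t u'"
    using vertex_in_node_append_Cons(2)[OF forests u'] T(4) T_eq i(3) split(2) by simp
  have lin: "lineage T u = bump (children T [], Suc (length l)) (lineage t u')"
    using vertex_in_node_append_Cons(3)[OF forests u'] T_eq i(3) split(2) len by simp
  have "lex_rank t u' < card t"
    using bij_betw_lex_rank[OF planar_tree_finite[OF forests(3)]] u' by (auto dest: bij_betw_apply)
  moreover have "card T = 1 + (\<Sum>t\<leftarrow>l. card t) + card t + (\<Sum>t\<leftarrow>rr. card t)"
    using card_node[OF ts(2)] ts(1) split(1) by simp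
  ultimately have "(\<Sum>t\<leftarrow>rr. card t) \<le> r"
    and "card t = (m - 1 - (\<Sum>t\<leftarrow>l. card t)) + 1 + (r - (\<Sum>t\<leftarrow>rr. card t))"
    using T(2) rank by linarith+
  then show thesis
    using that[OF T_eq forests(1,2)] len T(5) forests(3) u' rank lin
    by (auto simp: marked_trees_def)
qed

text \<open>A marked tree whose root has k children and whose marked vertex lies in the j-th
  subtree splits into j - 1 trees of total size sl to the left, the subtree carrying the mark, and
  k - j trees of total size sr to the right.\<close>
definition root_splits :: "nat \<Rightarrow> ((nat \<times> nat \<Rightarrow> nat) \<Rightarrow> bool) \<Rightarrow> nat \<Rightarrow> nat \<Rightarrow>
    ((nat \<times> nat) \<times> nat \<times> nat \<times> nat list set list \<times> nat list set \<times> nat list set list) set" where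
  "root_splits K P m r = (SIGMA x:IK K. SIGMA sl:{..<m}. SIGMA sr:{..r}.
     forests (snd x - 1) (int sl) \<times> marked_trees (P \<circ> bump x) (m - 1 - sl) (r - sr) \<times>
     forests (fst x - snd x) (int sr))"

lemma root_splitsD:
  assumes "((k, j), sl, sr, l, t, rr) \<in> root_splits K P m r"
  shows "forest l" "forest rr" "length l = j - 1" "length rr = k - j" "1 \<le> j" "j \<le> k" "k \<le> K"
    "sl < m" "sr \<le> r" "(\<Sum>t\<leftarrow>l. card t) = sl" "(\<Sum>t\<leftarrow>rr. card t) = sr"
    "t \<in> marked_trees (P \<circ> bump (k, j)) (m - 1 - sl) (r - sr)"
  using assms by (auto simp: root_splits_def IK_def forests_def)

lemma node_root_split:
  assumes "((k, j), sl, sr, l, t, rr) \<in> root_splits K P m r"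
  shows "node (l @ t # rr) \<in> marked_trees P m r"
    and "children (node (l @ t # rr)) [] = k"
    and "\<exists>u. Suc (length l) # u \<in> node (l @ t # rr) \<and>
      lex_rank (node (l @ t # rr)) (Suc (length l) # u) = m"
proof -
  note z = root_splitsD[OF assms]
  have len: "length l + 1 + length rr = k" "Suc (length l) = j"
    using z by auto
  then have "node (l @ t # rr) \<in> marked_trees P (1 + sl + (m - 1 - sl)) (r - sr + sr)"
    using node_in_marked_trees[of l rr t P "m - 1 - sl" "r - sr"] z by simp
  moreover have "1 + sl + (m - 1 - sl) = m" "r - sr + sr = r"
    using z by auto
  ultimately show "node (l @ t # rr) \<in> marked_trees P m r" by simp
  obtain u where u: "u \<in> t" "lex_rank t u = m - 1 - sl" "planar_tree t"
    using z by (auto simp: marked_trees_def)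
  then have "forest (l @ t # rr)" using z by auto
  then show "children (node (l @ t # rr)) [] = k"
    using len by (simp add: children_node_Nil)
  show "\<exists>u. Suc (length l) # u \<in> node (l @ t # rr) \<and>
      lex_rank (node (l @ t # rr)) (Suc (length l) # u) = m"
    using vertex_in_node_append_Cons(1,2)[of l rr t u] u z by auto
qed

text \<open>The position of the subtree carrying the mark is recovered from the first letter of the
  unique vertex of rank m.\<close>
lemma inj_on_root_splits: "inj_on (\<lambda>(x, sl, sr, l, t, rr). node (l @ t # rr)) (root_splits K P m r)"
proof (rule inj_onI)
  fix y y' assume y: "y \<in> root_splits K P m r" and y': "y' \<in> root_splits K P m r"
    and eq_y: "(\<lambda>(x, sl, sr, l, t, rr). node (l @ t # rr)) y =
      (\<lambda>(x, sl, sr, l, t, rr). node (l @ t # rr)) y'"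
  obtain k j sl sr l t rr where y_eq: "y = ((k, j), sl, sr, l, t, rr)"
    by (metis prod.collapse)
  obtain k' j' sl' sr' l' t' rr' where y'_eq: "y' = ((k', j'), sl', sr', l', t', rr')"
    by (metis prod.collapse)
  note z = y[unfolded y_eq] and z' = y'[unfolded y'_eq]
  have eq: "node (l @ t # rr) = node (l' @ t' # rr')"
    using eq_y by (simp add: y_eq y'_eq)
  obtain u u' where
    "Suc (length l) # u \<in> node (l @ t # rr)" "lex_rank (node (l @ t # rr)) (Suc (length l) # u) = m"
    "Suc (length l') # u' \<in> node (l @ t # rr)" "lex_rank (node (l @ t # rr)) (Suc (length l') # u') = m"
    using node_root_split(3)[OF z] node_root_split(3)[OF z'] eq by metis
  moreover have "planar_tree (node (l @ t # rr))"
    using node_root_split(1)[OF z] by (simp add: marked_trees_def)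
  ultimately have "length l = length l'"
    using bij_betw_lex_rank[OF planar_tree_finite]
    by (metis bij_betw_imp_inj_on inj_onD list.inject old.nat.inject)
  moreover have "l @ t # rr = l' @ t' # rr'"
    using root_splitsD[OF z] root_splitsD[OF z'] node_inj[OF _ _ eq] by (auto simp: marked_trees_def)
  ultimately show "y = y'"
    using root_splitsD[OF z] root_splitsD[OF z'] by (auto simp: y_eq y'_eq)
qed

lemma bij_betw_root_splits:
  assumes "0 < m"
  shows "bij_betw (\<lambda>(x, sl, sr, l, t, rr). node (l @ t # rr)) (root_splits K P m r)
    {T \<in> marked_trees P m r. children T [] \<le> K}"
proof (rule bij_betw_imageI[OF inj_on_root_splits], intro equalityI subsetI)
  fix T assume "T \<in> (\<lambda>(x, sl, sr, l, t, rr). node (l @ t # rr)) ` root_splits K P m r"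
  then show "T \<in> {T \<in> marked_trees P m r. children T [] \<le> K}"
    using node_root_split(1,2) root_splitsD(7) by force
next
  fix T assume T: "T \<in> {T \<in> marked_trees P m r. children T [] \<le> K}"
  then obtain l t rr where "T = node (l @ t # rr)" "forest l" "forest rr"
    "length (l @ t # rr) = children T []"
    "t \<in> marked_trees (P \<circ> bump (children T [], Suc (length l)))
        (m - 1 - (\<Sum>t\<leftarrow>l. card t)) (r - (\<Sum>t\<leftarrow>rr. card t))"
    "(\<Sum>t\<leftarrow>l. card t) < m" "(\<Sum>t\<leftarrow>rr. card t) \<le> r"
    using marked_trees_decompose[of T P m r] assms by auto
  moreover have "children T [] \<le> K" using T by simp
  ultimately have "((children T [], Suc (length l)), \<Sum>t\<leftarrow>l. card t, \<Sum>t\<leftarrow>rr. card t, l, t, rr)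
      \<in> root_splits K P m r"
    by (auto simp: root_splits_def IK_def forests_def)
  then show "T \<in> (\<lambda>(x, sl, sr, l, t, rr). node (l @ t # rr)) ` root_splits K P m r"
    using \<open>T = node (l @ t # rr)\<close> by force
qed

lemma sum_product_3:
  fixes f g h :: "_ \<Rightarrow> 'a :: comm_semiring_1"
  shows "sum f A * sum g B * sum h C = (\<Sum>(a, b, c)\<in>A \<times> B \<times> C. f a * g b * h c)"
proof -
  have "sum f A * sum g B * sum h C = (\<Sum>a\<in>A. \<Sum>b\<in>B. f a * g b) * sum h C"
    by (simp only: sum_product)
  also have "\<dots> = (\<Sum>a\<in>A. \<Sum>b\<in>B. f a * g b * sum h C)"
    by (simp only: sum_distrib_right)
  also have "\<dots> = (\<Sum>a\<in>A. \<Sum>b\<in>B. \<Sum>c\<in>C. f a * g b * h c)"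
    by (simp only: sum_distrib_left)
  finally show ?thesis by (simp add: sum.cartesian_product)
qed

lemma sum_root_splits:
  "(\<Sum>(x, sl, sr, l, t, rr)\<in>root_splits K P m r.
      \<mu> (fst x) * ((\<Prod>t\<leftarrow>l. gw_weight \<mu> t) * gw_weight \<mu> t * (\<Prod>t\<leftarrow>rr. gw_weight \<mu> t))) =
    (\<Sum>x\<in>IK K. \<mu> (fst x) * (\<Sum>sl<m. \<Sum>sr\<le>r.
       forest_size_prob \<mu> (snd x - 1) (int sl) *
       (\<Sum>t\<in>marked_trees (P \<circ> bump x) (m - 1 - sl) (r - sr). gw_weight \<mu> t) *
       forest_size_prob \<mu> (fst x - snd x) (int sr)))"
proof -
  let ?w = "gw_weight \<mu>"
  let ?W = "\<lambda>ts. \<Prod>t\<leftarrow>ts. gw_weight \<mu> t"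
  let ?S = "\<lambda>x sl sr. forests (snd x - 1) (int sl) \<times> marked_trees (P \<circ> bump x) (m - 1 - sl) (r - sr) \<times>
    forests (fst x - snd x) (int sr)"
  have "\<mu> (fst x) * (forest_size_prob \<mu> (snd x - 1) (int sl) *
      (\<Sum>t\<in>marked_trees (P \<circ> bump x) (m - 1 - sl) (r - sr). ?w t) *
      forest_size_prob \<mu> (fst x - snd x) (int sr)) =
    (\<Sum>(l, t, rr)\<in>?S x sl sr. \<mu> (fst x) * (?W l * ?w t * ?W rr))" for x sl sr
    unfolding forest_size_prob_eq_sum sum_product_3 by (simp add: sum_distrib_left case_prod_beta)
  then have "(\<Sum>x\<in>IK K. \<mu> (fst x) * (\<Sum>sl<m. \<Sum>sr\<le>r.
       forest_size_prob \<mu> (snd x - 1) (int sl) *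
       (\<Sum>t\<in>marked_trees (P \<circ> bump x) (m - 1 - sl) (r - sr). ?w t) *
       forest_size_prob \<mu> (fst x - snd x) (int sr))) =
    (\<Sum>x\<in>IK K. \<Sum>sl<m. \<Sum>sr\<le>r. \<Sum>(l, t, rr)\<in>?S x sl sr. \<mu> (fst x) * (?W l * ?w t * ?W rr))"
    by (simp add: sum_distrib_left)
  also have "\<dots> = (\<Sum>(x, sl, sr, l, t, rr)\<in>root_splits K P m r. \<mu> (fst x) * (?W l * ?w t * ?W rr))"
    unfolding root_splits_def
    by (simp add: sum.Sigma finite_IK finite_forests finite_marked_trees)
  finally show ?thesis ..
qed

lemma sum_marked_trees_root_decomposition:
  assumes "\<forall>k>K. \<mu> k = 0" "0 < m"
  shows "(\<Sum>T\<in>marked_trees P m r. gw_weight \<mu> T) =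
    (\<Sum>x\<in>IK K. \<mu> (fst x) * (\<Sum>sl<m. \<Sum>sr\<le>r.
       forest_size_prob \<mu> (snd x - 1) (int sl) *
       (\<Sum>t\<in>marked_trees (P \<circ> bump x) (m - 1 - sl) (r - sr). gw_weight \<mu> t) *
       forest_size_prob \<mu> (fst x - snd x) (int sr)))"
proof -
  let ?w = "gw_weight \<mu>"
  let ?W = "\<lambda>ts. \<Prod>t\<leftarrow>ts. gw_weight \<mu> t"
  have "?w T = 0" if "T \<in> marked_trees P m r" "\<not> children T [] \<le> K" for T
    using that assms(1) by (intro gw_weight_eq_0) (auto simp: marked_trees_def)
  then have "(\<Sum>T\<in>marked_trees P m r. ?w T) =
      (\<Sum>T\<in>{T \<in> marked_trees P m r. children T [] \<le> K}. ?w T)"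
    by (intro sum.mono_neutral_right finite_marked_trees) auto
  also have "\<dots> = (\<Sum>(x, sl, sr, l, t, rr)\<in>root_splits K P m r. ?w (node (l @ t # rr)))"
    by (subst sum.reindex_bij_betw[OF bij_betw_root_splits[OF assms(2)], symmetric])
      (simp add: case_prod_beta)
  also have "\<dots> = (\<Sum>(x, sl, sr, l, t, rr)\<in>root_splits K P m r. \<mu> (fst x) * (?W l * ?w t * ?W rr))"
  proof (intro sum.cong refl, clarify)
    fix k j sl sr l t rr assume "((k, j), sl, sr, l, t, rr) \<in> root_splits K P m r"
    then have "forest (l @ t # rr)" "length (l @ t # rr) = k"
      by (auto simp: root_splits_def forests_def marked_trees_def IK_def)
    then show "?w (node (l @ t # rr)) = \<mu> (fst (k, j)) * (?W l * ?w t * ?W rr)"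
      by (simp add: gw_weight_node mult.assoc)
  qed
  also have "\<dots> = (\<Sum>x\<in>IK K. \<mu> (fst x) * (\<Sum>sl<m. \<Sum>sr\<le>r.
       forest_size_prob \<mu> (snd x - 1) (int sl) *
       (\<Sum>t\<in>marked_trees (P \<circ> bump x) (m - 1 - sl) (r - sr). ?w t) *
       forest_size_prob \<mu> (fst x - snd x) (int sr)))"
    by (rule sum_root_splits)
  finally show ?thesis .
qed

section \<open>Counting marked trees\<close>

lemma forest_size_prob_double_conv:
  assumes "0 < m"
  shows "(\<Sum>sl<m. \<Sum>sr\<le>r. forest_size_prob \<mu> k (int sl) *
      (forest_size_prob \<mu> p (int (m - 1 - sl) - int h) *
       forest_size_prob \<mu> (Suc q) (int (r - sr) + 1)) * forest_size_prob \<mu> k' (int sr)) =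
    forest_size_prob \<mu> (k + p) (int m - int (Suc h)) *
    forest_size_prob \<mu> (k' + Suc q) (int r + 1)"
proof -
  let ?F = "forest_size_prob \<mu>"
  have "(\<Sum>sl<m. \<Sum>sr\<le>r. ?F k (int sl) * (?F p (int (m - 1 - sl) - int h) *
       ?F (Suc q) (int (r - sr) + 1)) * ?F k' (int sr)) =
      (\<Sum>sl<m. ?F k (int sl) * ?F p (int m - int (Suc h) - int sl)) *
      (\<Sum>sr\<le>r. ?F k' (int sr) * ?F (Suc q) (int r + 1 - int sr))"
    unfolding sum_product by (intro sum.cong refl) (simp add: algebra_simps)
  also have "(\<Sum>sl<m. ?F k (int sl) * ?F p (int m - int (Suc h) - int sl)) =
      ?F (k + p) (int m - int (Suc h))"
    using forest_size_prob_add[of "int m - int (Suc h)" "m - 1" \<mu> k p] assms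
    by (simp add: lessThan_Suc_atMost[symmetric])
  also have "(\<Sum>sr\<le>r. ?F k' (int sr) * ?F (Suc q) (int r + 1 - int sr)) =
      ?F (k' + Suc q) (int r + 1)"
    using forest_size_prob_add[of "int r + 1" "Suc r" \<mu> k' "Suc q"]
    by (simp add: forest_size_prob_0_right)
  finally show ?thesis .
qed

definition lineage_eq :: "nat \<Rightarrow> (nat \<times> nat \<Rightarrow> nat) \<Rightarrow> (nat \<times> nat \<Rightarrow> nat) \<Rightarrow> bool" where
  "lineage_eq K a l \<longleftrightarrow> (\<forall>y\<in>IK K. l y = a y)"

lemma lineage_eq_bump:
  assumes "x \<in> IK K"
  shows "lineage_eq K a \<circ> bump x = (if 0 < a x then lineage_eq K (a(x := a x - 1)) else (\<lambda>_. False))"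
  using assms by (force simp: fun_eq_iff lineage_eq_def bump_def)

lemma marked_trees_False: "marked_trees (\<lambda>_. False) m r = {}"
  by (simp add: marked_trees_def)

lemma sum_marked_trees_lineage_eq_0:
  assumes "sum a (IK K) = h"
  shows "(\<Sum>T\<in>marked_trees (lineage_eq K a) 0 r. gw_weight \<mu> T) =
    Qh \<mu> K h a * (forest_size_prob \<mu> (N1 K a) (0 - int h) *
      forest_size_prob \<mu> (1 + N2 K a) (int r + 1))"
proof (cases "h = 0")
  case True
  then have "a y = 0" if "y \<in> IK K" for y
    using assms that by (simp add: finite_IK)
  then have "lineage_eq K a (\<lambda>_. 0)" "Qh \<mu> K h a = 1" "N1 K a = 0" "N2 K a = 0"
    using True by (simp_all add: lineage_eq_def Qh_def N1_def N2_def case_prod_beta)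
  then show ?thesis
    using forest_size_prob_1[of \<mu> "r + 1"] True
    by (simp add: marked_trees_0 forest_size_prob_0_left gw_size_prob_def add.commute)
next
  case False
  then obtain y where "y \<in> IK K" "a y \<noteq> 0"
    using assms by (metis sum.neutral)
  then have "\<not> lineage_eq K a (\<lambda>_. 0)" by (auto simp: lineage_eq_def)
  then show ?thesis
    using False by (simp add: marked_trees_0 forest_size_prob_neg)
qed

lemma sum_side_forests_marked_trees:
  assumes "x \<in> IK K" "0 < m"
    and IH: "\<And>m r. (\<Sum>T\<in>marked_trees (lineage_eq K b) m r. gw_weight \<mu> T) =
      Qh \<mu> K h b * (forest_size_prob \<mu> (N1 K b) (int m - int h) *
        forest_size_prob \<mu> (1 + N2 K b) (int r + 1))"
  shows "(\<Sum>sl<m. \<Sum>sr\<le>r. forest_size_prob \<mu> (snd x - 1) (int sl) *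
      (\<Sum>t\<in>marked_trees (lineage_eq K b) (m - 1 - sl) (r - sr). gw_weight \<mu> t) *
      forest_size_prob \<mu> (fst x - snd x) (int sr)) =
    Qh \<mu> K h b * (forest_size_prob \<mu> (N1 K (bump x b)) (int m - int (Suc h)) *
      forest_size_prob \<mu> (1 + N2 K (bump x b)) (int r + 1))"
proof -
  let ?F = "forest_size_prob \<mu>"
  have "(\<Sum>sl<m. \<Sum>sr\<le>r. ?F (snd x - 1) (int sl) *
      (\<Sum>t\<in>marked_trees (lineage_eq K b) (m - 1 - sl) (r - sr). gw_weight \<mu> t) *
      ?F (fst x - snd x) (int sr)) =
    Qh \<mu> K h b * (\<Sum>sl<m. \<Sum>sr\<le>r. ?F (snd x - 1) (int sl) *
      (?F (N1 K b) (int (m - 1 - sl) - int h) * ?F (Suc (N2 K b)) (int (r - sr) + 1)) *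
      ?F (fst x - snd x) (int sr))"
    by (simp only: IH) (simp add: sum_distrib_left mult_ac)
  then show ?thesis
    using forest_size_prob_double_conv[OF assms(2)] by (simp add: N1_bump N2_bump assms(1))
qed

lemma sum_marked_trees_lineage_eq:
  assumes "\<forall>k>K. \<mu> k = 0" "sum a (IK K) = h"
  shows "(\<Sum>T\<in>marked_trees (lineage_eq K a) m r. gw_weight \<mu> T) =
    Qh \<mu> K h a * (forest_size_prob \<mu> (N1 K a) (int m - int h) *
      forest_size_prob \<mu> (1 + N2 K a) (int r + 1))"
  using assms(2)
proof (induction h arbitrary: a m r)
  case 0
  show ?case
  proof (cases "m = 0")
    case False
    have "a x = 0" if "x \<in> IK K" for x
      using 0 that by (simp add: finite_IK)
    then have "(\<Sum>T\<in>marked_trees (lineage_eq K a) m r. gw_weight \<mu> T) = 0"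
      using False
      by (simp add: sum_marked_trees_root_decomposition[OF assms(1)] lineage_eq_bump marked_trees_False)
    moreover have "N1 K a = 0"
      using \<open>\<And>x. x \<in> IK K \<Longrightarrow> a x = 0\<close> by (simp add: N1_def case_prod_beta)
    ultimately show ?thesis
      using False by (simp add: forest_size_prob_0_left)
  qed (use sum_marked_trees_lineage_eq_0[OF 0] in simp)
next
  case (Suc h)
  show ?case
  proof (cases "m = 0")
    case False
    then have "0 < m" by simp
    let ?FF = "forest_size_prob \<mu> (N1 K a) (int m - int (Suc h)) *
      forest_size_prob \<mu> (1 + N2 K a) (int r + 1)"
    have summand: "\<mu> (fst x) * (\<Sum>sl<m. \<Sum>sr\<le>r. forest_size_prob \<mu> (snd x - 1) (int sl) *
        (\<Sum>t\<in>marked_trees (lineage_eq K a \<circ> bump x) (m - 1 - sl) (r - sr). gw_weight \<mu> t) *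
        forest_size_prob \<mu> (fst x - snd x) (int sr)) =
      (if 0 < a x then \<mu> (fst x) * Qh \<mu> K h (a(x := a x - 1)) else 0) * ?FF"
      if x: "x \<in> IK K" for x
    proof (cases "0 < a x")
      case True
      let ?b = "a(x := a x - 1)"
      have b: "bump x ?b = a" "lineage_eq K a \<circ> bump x = lineage_eq K ?b"
        using bump_pred[of a x, OF True] lineage_eq_bump[OF x] True by simp_all
      then have "sum ?b (IK K) = h"
        using sum_IK_bump[OF x, of ?b] Suc.prems by simp
      then show ?thesis
        using sum_side_forests_marked_trees[OF x \<open>0 < m\<close> Suc.IH] b True by simp
    qed (simp add: lineage_eq_bump x marked_trees_False)
    have "(\<Sum>T\<in>marked_trees (lineage_eq K a) m r. gw_weight \<mu> T) =
        (\<Sum>x\<in>IK K. (if 0 < a x then \<mu> (fst x) * Qh \<mu> K h (a(x := a x - 1)) else 0) * ?FF)"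
      unfolding sum_marked_trees_root_decomposition[OF assms(1) \<open>0 < m\<close>]
      by (intro sum.cong refl summand)
    also have "\<dots> = Qh \<mu> K (Suc h) a * ?FF"
      by (simp add: Qh_Suc[OF Suc.prems] sum_distrib_right)
    finally show ?thesis .
  qed (use sum_marked_trees_lineage_eq_0[OF Suc.prems] in simp)
qed

lemma lineage_event_eq_marked_trees:
  assumes "m \<le> n"
  shows "{T. planar_tree T \<and> card T = n + 1 \<and> (\<forall>i\<in>IK K. lineage T (vertex T m) i = a i)} =
    marked_trees (lineage_eq K a) m (n - m)"
proof -
  have "(\<forall>i\<in>IK K. lineage T (vertex T m) i = a i) \<longleftrightarrow>
      (\<exists>u\<in>T. lex_rank T u = m \<and> lineage_eq K a (lineage T u))"
    if T: "planar_tree T" "card T = n + 1" for T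
  proof -
    have bij: "bij_betw (lex_rank T) T {..<card T}"
      by (rule bij_betw_lex_rank[OF planar_tree_finite[OF T(1)]])
    have "m \<in> lex_rank T ` T"
      using bij_betw_imp_surj_on[OF bij] T(2) assms by auto
    then obtain u where u: "u \<in> T" "lex_rank T u = m" by blast
    have "v = u" if "v \<in> T" "lex_rank T v = m" for v
      using inj_onD[OF bij_betw_imp_inj_on[OF bij], of v u] u that by simp
    then have "(\<exists>v\<in>T. lex_rank T v = m \<and> lineage_eq K a (lineage T v)) \<longleftrightarrow>
        lineage_eq K a (lineage T u)"
      using u by blast
    then show ?thesis
      using vertex_eqI[OF planar_tree_finite[OF T(1)] u] by (simp add: lineage_eq_def)
  qed
  then show ?thesis
    using assms by (auto simp: marked_trees_def)
qed

theorem proposition5: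
  fixes \<mu> :: "nat \<Rightarrow> real" and K n m h :: nat and a :: "nat \<times> nat \<Rightarrow> nat"
  assumes "\<forall>k. 0 \<le> \<mu> k"
    and "K > 0"
    and "\<forall>k>K. \<mu> k = 0"
    and "(\<Sum>k\<le>K. \<mu> k) = 1"
    and "(\<Sum>k\<le>K. real k * \<mu> k) = 1"
    and "\<mu> 0 + \<mu> 1 \<noteq> 1"
    and "gw_size_prob \<mu> (n + 1) > 0"
    and "\<forall>i. i \<notin> IK K \<longrightarrow> a i = 0"
    and "(\<Sum>i\<in>IK K. a i) = h"
    and "m \<le> n"
  shows "lineage_prob \<mu> K n m a =
    Qh \<mu> K h a *
      (forest_size_prob \<mu> (N1 K a) (int m - int h) *
       forest_size_prob \<mu> (1 + N2 K a) (int n + 1 - int m))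
      / gw_size_prob \<mu> (n + 1)"
proof -
  have "int (n - m) + 1 = int n + 1 - int m" using assms(10) by simp
  then show ?thesis
    unfolding lineage_prob_def lineage_event_eq_marked_trees[OF assms(10)]
      sum_marked_trees_lineage_eq[OF assms(3,9)]
    by (simp only:)
qed

end
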